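(* Consider the HYZ12 protocol with $k$ sites and accuracy parameter $\varepsilon$ with $\varepsilon\sqrt{k}<1$, run on the event stream generated by the round-robin adversary (both described in the context). Fix the transcript (all states of the adversary, sites and server) up to the initiation of a round at event count $n_0\ge 4\sqrt{k}/\varepsilon$, and consider the execution from event $n_0+1$ onward. Let $R$ be the number of distinct sites that send a Report message to the server during the next $n_0$ events. Then \[ \Pr\!\left[R>\tfrac{k}{8}\right]\;\ge\;1-\exp\!\left(-\tfrac{\sqrt{k}}{32\varepsilon}\right). \]
   Context: Distributed counting: a server and $k$ sites; events arrive one at a time, each at some site; $n_i$ is the number of events at site $i$ so far and $n=\sum_in_i$ is the event count. ${\rm Geom}(q)$ is the geometric distribution on $\{1,2,\dots\}$. Doubling subprotocol: each site, after incrementing $n_i$, sends $(i,n_i)$ to the server whenever $n_i$ is a power of $2$. The server keeps $n'_i$ (initially $0$), $n'=\sum_in'_i$, threshold $\tau=1$; upon receiving $(i,n_i)$ it sets $n'\gets n'+n_i-n'_i$, $n'_i\gets n_i$, and if $n'\ge2\tau$ triggers BoundaryReached$(n')$ and sets $\tau\gets n'$. HYZ12 protocol: each site keeps a transmission probability $p$ (initially $1$, updated by server broadcasts) and $n_i$; on each event at site $i$, $n_i\gets n_i+1$ and independently with probability $p$ the site sends Report$(i,n_i)$. The server keeps $\bar n_i=\hat n_i=0$ for each $i$ and $p=1$. On Report$(i,\bar n)$: $\bar n_i\gets\bar n$, $\hat n_i\gets\bar n_i-1+1/p$, publish $\hat n=\sum_j\hat n_j$. On BoundaryReached$(n')$ (reports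 processed first): a new round starts; $p_{\rm old}\gets p$, $p\gets2^{\min\{0,\lfloor\log_2(\sqrt k/(\varepsilon n'))\rfloor\}}$; if $p<1$, for each $i$ sample independently $Z_i=B\cdot G$, $B\sim{\rm Bernoulli}(1-p/p_{\rm old})$, $G\sim{\rm Geom}(p)$, set $\bar n_i\gets\max\{0,\bar n_i-Z_i\}$, $\hat n_i\gets0$ if $\bar n_i=0$ else $\bar n_i-1+1/p$, and broadcast $p$. Round-robin adversary: start with current site $i=1$ and record the current published estimate $\hat n_{\rm last}$. Repeatedly inject events at the current site $i$ until the published estimate differs from $\hat n_{\rm last}$; then set $\hat n_{\rm last}$ to the new estimate and move to site $1+(i\bmod k)$. *)

theory Defs
  imports "HOL-Probability.Probability"
begin

text \<open>Sites are indexed 0..k-1 (site 0 plays the role of site 1 in the paper).\<close>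

record st =
  nloc :: "nat \<Rightarrow> nat"
  ntot :: nat
  srv_n :: "nat \<Rightarrow> nat"       \<comment> \<open>doubling subprotocol: server copies n'_i\<close>
  srv_sum :: nat
  tau :: nat
  nbar :: "nat \<Rightarrow> nat"
  nhat :: "nat \<Rightarrow> real"
  pp :: real                   \<comment> \<open>transmission probability p (server and sites)\<close>
  pub :: real
  adv_site :: nat
  adv_last :: real
  round_start :: bool          \<comment> \<open>BoundaryReached (new round) happened at the last event\<close>

definition init_st :: st where
  "init_st = \<lparr> nloc = (\<lambda>_. 0), ntot = 0, srv_n = (\<lambda>_. 0), srv_sum = 0, tau = 1,
     nbar = (\<lambda>_. 0), nhat = (\<lambda>_. 0), pp = 1, pub = 0, adv_site = 0, adv_last = 0,
     round_start = False \<rparr>"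

definition is_pow2 :: "nat \<Rightarrow> bool" where
  "is_pow2 m \<longleftrightarrow> (\<exists>j. m = 2 ^ j)"

definition newp :: "nat \<Rightarrow> real \<Rightarrow> nat \<Rightarrow> real" where
  "newp k eps n' = 2 powr real_of_int (min 0 \<lfloor>log 2 (sqrt (real k) / (eps * real n'))\<rfloor>)"

definition geom1 :: "real \<Rightarrow> nat pmf" where
  "geom1 p = map_pmf Suc (geometric_pmf p)"

definition Zdist :: "real \<Rightarrow> real \<Rightarrow> nat pmf" where
  "Zdist pold p = bind_pmf (bernoulli_pmf (1 - p / pold)) (\<lambda>b.
      map_pmf (\<lambda>g. (if b then 1 else 0) * g) (geom1 p))"

definition site_event :: "st \<Rightarrow> st" where
  "site_event s = (let i = adv_site s in
     s\<lparr> nloc := (nloc s)(i := nloc s i + 1), ntot := ntot s + 1, round_start := False \<rparr>)"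

definition report_recv :: "nat \<Rightarrow> st \<Rightarrow> nat \<Rightarrow> st" where
  "report_recv k s i = (let nb = (nbar s)(i := nloc s i);
       nh = (nhat s)(i := real (nb i) - 1 + 1 / pp s) in
     s\<lparr> nbar := nb, nhat := nh, pub := (\<Sum>j<k. nh j) \<rparr>)"

text \<open>Doubling subprotocol after the event at site i; returns whether BoundaryReached fired.\<close>
definition doubling :: "st \<Rightarrow> nat \<Rightarrow> st \<times> bool" where
  "doubling s i = (if is_pow2 (nloc s i) then
      (let n' = srv_sum s + nloc s i - srv_n s i;
           s' = s\<lparr> srv_sum := n', srv_n := (srv_n s)(i := nloc s i) \<rparr> in
       if real n' \<ge> 2 * real (tau s) then (s'\<lparr> tau := n' \<rparr>, True) else (s', False))
    else (s, False))"

definition boundary :: "nat \<Rightarrow> real \<Rightarrow> st \<Rightarrow> st pmf" where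
  "boundary k eps s = (let pold = pp s; p = newp k eps (srv_sum s); s0 = s\<lparr> pp := p, round_start := True \<rparr> in
     if p < 1 then
       map_pmf (\<lambda>Z. let nb = (\<lambda>j. nbar s j - Z j);
                         nh = (\<lambda>j. if nb j = 0 then 0 else real (nb j) - 1 + 1 / p) in
                     s0\<lparr> nbar := nb, nhat := nh \<rparr>)
         (Pi_pmf {..<k} 0 (\<lambda>_. Zdist pold p))
     else return_pmf s0)"

definition adv_upd :: "nat \<Rightarrow> st \<Rightarrow> st" where
  "adv_upd k s = (if pub s \<noteq> adv_last s
      then s\<lparr> adv_last := pub s, adv_site := (adv_site s + 1) mod k \<rparr> else s)"

text \<open>One event; the boolean says whether the site sent a Report.\<close>
definition step :: "nat \<Rightarrow> real \<Rightarrow> st \<Rightarrow> (bool \<times> st) pmf" where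
  "step k eps s = bind_pmf (bernoulli_pmf (pp s)) (\<lambda>c.
     (let i = adv_site s;
          s1 = site_event s;
          s2 = (if c then report_recv k s1 i else s1);
          (s3, bd) = doubling s2 i in
      map_pmf (\<lambda>s4. (c, adv_upd k s4)) (if bd then boundary k eps s3 else return_pmf s3)))"

text \<open>Execution of m events: set of sites that sent a Report, and final state.\<close>
fun exec :: "nat \<Rightarrow> real \<Rightarrow> nat \<Rightarrow> st \<Rightarrow> (nat set \<times> st) pmf" where
  "exec k eps 0 s = return_pmf ({}, s)"
| "exec k eps (Suc m) s = bind_pmf (step k eps s) (\<lambda>(c, s1).
      map_pmf (\<lambda>(R, s2). ((if c then {adv_site s} else {}) \<union> R, s2)) (exec k eps m s1))"

definition run :: "nat \<Rightarrow> real \<Rightarrow> nat \<Rightarrow> st \<Rightarrow> st pmf" where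
  "run k eps m s = map_pmf snd (exec k eps m s)"

end

theory Submission
  imports Defs "HOL-Number_Theory.Cong"
begin

text \<open>
  Right after a round starts at event count \<open>n\<^sub>0\<close> the threshold \<open>\<tau>\<close> lies in
  \<open>(n\<^sub>0/2, n\<^sub>0]\<close>, and during the next \<open>n\<^sub>0\<close> events the transmission
  probability stays at least \<open>\<surd>k/(2\<epsilon>\<tau>)\<close>, also after \<open>\<tau>\<close> changes at a further
  round start. Whatever the run, the coin flips deciding whether events are reported thus
  have success probabilities \<open>p \<le> 1/4\<close> summing to at least \<open>\<surd>k/(2\<epsilon>)\<close>. A
  supermartingale argument on this budget bounds the number \<open>r\<close> of reports from below,
  \<open>E[2\<^sup>-\<^sup>r] \<le> exp(-\<surd>k/(4\<epsilon>))\<close>, and \<open>P(r \<le> 3)\<close> is at most a Poisson-like tail.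
  On the other hand all reports but at most two move the round-robin adversary to the next
  site, so at least \<open>min(k, r - 2)\<close> distinct sites report.
\<close>

lemma sum_fun_upd:
  fixes f :: "'a \<Rightarrow> 'b::comm_monoid_add"
  assumes "finite A" "i \<in> A"
  shows "sum (f(i := v)) A + f i = sum f A + v"
proof -
  have "sum (f(i := v)) A = v + sum f (A - {i})"
    using assms by (subst sum.remove[of A i]) auto
  moreover have "sum f A = f i + sum f (A - {i})"
    using assms by (rule sum.remove)
  ultimately show ?thesis
    by (simp add: ac_simps)
qed

definition report_state :: "nat \<Rightarrow> st \<Rightarrow> bool \<Rightarrow> st" where
  "report_state k s c = (if c then report_recv k (site_event s) (adv_site s) else site_event s)"

definition server_update :: "nat \<Rightarrow> real \<Rightarrow> st \<Rightarrow> bool \<Rightarrow> st pmf" where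
  "server_update k eps s c = (case doubling (report_state k s c) (adv_site s) of
     (s', bd) \<Rightarrow> if bd then boundary k eps s' else return_pmf s')"

lemma step_eq_server_update:
  "step k eps s = bind_pmf (bernoulli_pmf (pp s))
     (\<lambda>c. map_pmf (\<lambda>s'. (c, adv_upd k s')) (server_update k eps s c))"
  unfolding step_def server_update_def report_state_def Let_def
  by (intro bind_pmf_cong refl) (auto split: prod.splits)

lemma set_pmf_stepE:
  assumes "(c, s') \<in> set_pmf (step k eps s)"
  obtains s3 bd s4 where "doubling (report_state k s c) (adv_site s) = (s3, bd)"
    and "if bd then s4 \<in> set_pmf (boundary k eps s3) else s4 = s3" and "s' = adv_upd k s4"
proof -
  from assms obtain s4 where "s4 \<in> set_pmf (server_update k eps s c)" "s' = adv_upd k s4"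
    unfolding step_eq_server_update by auto
  then show ?thesis
    unfolding server_update_def
    by (cases "doubling (report_state k s c) (adv_site s)") (auto intro: that split: if_splits)
qed

lemma report_state_simps [simp]:
  "nloc (report_state k s c) = (nloc s)(adv_site s := Suc (nloc s (adv_site s)))"
  "ntot (report_state k s c) = Suc (ntot s)"
  "srv_n (report_state k s c) = srv_n s" "srv_sum (report_state k s c) = srv_sum s"
  "tau (report_state k s c) = tau s" "pp (report_state k s c) = pp s"
  "round_start (report_state k s c) = False" "adv_site (report_state k s c) = adv_site s"
  "adv_last (report_state k s c) = adv_last s"
  "nbar (report_state k s c) =
     (if c then (nbar s)(adv_site s := Suc (nloc s (adv_site s))) else nbar s)"
  "nhat (report_state k s c) =
     (if c then (nhat s)(adv_site s := real (nloc s (adv_site s)) + 1 / pp s) else nhat s)"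
  "pub (report_state k s c) =
     (if c then (\<Sum>j<k. ((nhat s)(adv_site s := real (nloc s (adv_site s)) + 1 / pp s)) j)
      else pub s)"
  by (auto simp: report_state_def report_recv_def site_event_def Let_def fun_eq_iff
      intro!: sum.cong)

lemma doubling_unchanged:
  assumes "doubling s i = (s', bd)"
  shows "nloc s' = nloc s" "ntot s' = ntot s" "nbar s' = nbar s" "nhat s' = nhat s"
    "pp s' = pp s" "pub s' = pub s" "adv_site s' = adv_site s" "adv_last s' = adv_last s"
    "round_start s' = round_start s"
  using assms by (auto simp: doubling_def Let_def split: if_splits)

lemma doubling_counters:
  assumes "doubling s i = (s', bd)"
  shows "srv_n s' = (if is_pow2 (nloc s i) then (srv_n s)(i := nloc s i) else srv_n s)"
    "srv_sum s' = (if is_pow2 (nloc s i) then srv_sum s + nloc s i - srv_n s i else srv_sum s)"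
    "tau s' = (if bd then srv_sum s' else tau s)"
    "bd \<Longrightarrow> 2 * tau s \<le> srv_sum s'"
  using assms by (auto simp: doubling_def Let_def split: if_splits)

definition nhat_consistent :: "st \<Rightarrow> bool" where
  "nhat_consistent s \<longleftrightarrow>
     (\<forall>j. nhat s j = (if nbar s j = 0 then 0 else real (nbar s j) - 1 + 1 / pp s))"

lemma boundary_fields:
  assumes "s' \<in> set_pmf (boundary k eps s)"
  shows "nloc s' = nloc s" "ntot s' = ntot s" "srv_n s' = srv_n s" "srv_sum s' = srv_sum s"
    "tau s' = tau s" "pub s' = pub s" "adv_site s' = adv_site s" "adv_last s' = adv_last s"
    "pp s' = newp k eps (srv_sum s)" "round_start s'" "nbar s' j \<le> nbar s j"
    "pp s' < 1 \<Longrightarrow> nhat_consistent s'"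
  using assms by (auto simp: boundary_def Let_def nhat_consistent_def split: if_splits)

lemma adv_upd_simps [simp]:
  "nloc (adv_upd k s) = nloc s" "ntot (adv_upd k s) = ntot s" "srv_n (adv_upd k s) = srv_n s"
  "srv_sum (adv_upd k s) = srv_sum s" "tau (adv_upd k s) = tau s" "pub (adv_upd k s) = pub s"
  "nbar (adv_upd k s) = nbar s" "nhat (adv_upd k s) = nhat s" "pp (adv_upd k s) = pp s"
  "round_start (adv_upd k s) = round_start s" "adv_last (adv_upd k s) = pub s"
  "adv_site (adv_upd k s) =
     (if pub s \<noteq> adv_last s then (adv_site s + 1) mod k else adv_site s)"
  by (auto simp: adv_upd_def)

lemma nhat_consistent_adv_upd [simp]: "nhat_consistent (adv_upd k s) = nhat_consistent s"
  by (simp add: nhat_consistent_def)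

lemma set_pmf_step_fields:
  assumes "(c, s') \<in> set_pmf (step k eps s)"
  shows "ntot s' = Suc (ntot s)" "pub s' = pub (report_state k s c)" "adv_last s' = pub s'"
    "adv_site s' = (if pub s' \<noteq> adv_last s then (adv_site s + 1) mod k else adv_site s)"
    "round_start s' \<Longrightarrow> 2 * tau s \<le> tau s'"
    "\<not> round_start s' \<Longrightarrow> tau s' = tau s \<and> pp s' = pp s \<and>
       nbar s' = nbar (report_state k s c) \<and> nhat s' = nhat (report_state k s c)"
proof -
  obtain s3 bd s4 where db: "doubling (report_state k s c) (adv_site s) = (s3, bd)"
    and s4: "if bd then s4 \<in> set_pmf (boundary k eps s3) else s4 = s3" and s': "s' = adv_upd k s4"
    using assms by (rule set_pmf_stepE)
  note du = doubling_unchanged[OF db] and dc = doubling_counters[OF db]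
  have "ntot s4 = ntot s3 \<and> pub s4 = pub s3 \<and> adv_site s4 = adv_site s3 \<and>
      adv_last s4 = adv_last s3 \<and> tau s4 = tau s3 \<and> round_start s4 = bd \<and> (\<not> bd \<longrightarrow> s4 = s3)"
    using s4 du(9) by (cases bd) (simp_all add: boundary_fields)
  then have s4_fields: "ntot s4 = ntot s3" "pub s4 = pub s3" "adv_site s4 = adv_site s3"
    "adv_last s4 = adv_last s3" "tau s4 = tau s3" "round_start s4 = bd" "\<not> bd \<Longrightarrow> s4 = s3"
    by simp_all
  show "ntot s' = Suc (ntot s)" "pub s' = pub (report_state k s c)" "adv_last s' = pub s'"
    "adv_site s' = (if pub s' \<noteq> adv_last s then (adv_site s + 1) mod k else adv_site s)"
    using s4_fields du(2,6,7,8) by (simp_all add: s')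
  show "round_start s' \<Longrightarrow> 2 * tau s \<le> tau s'"
    using s4_fields dc(3,4) by (simp add: s')
  show "\<not> round_start s' \<Longrightarrow> tau s' = tau s \<and> pp s' = pp s \<and>
      nbar s' = nbar (report_state k s c) \<and> nhat s' = nhat (report_state k s c)"
    using s4_fields du(3,4,5) dc(3) by (simp add: s')
qed

section \<open>Invariants of reachable states\<close>

definition is_pow2_floor :: "nat \<Rightarrow> nat \<Rightarrow> bool" where
  "is_pow2_floor a n \<longleftrightarrow> n = 0 \<and> a = 0 \<or> is_pow2 a \<and> a \<le> n \<and> n < 2 * a"

lemma is_pow2_floor_Suc:
  assumes "is_pow2_floor a n"
  shows "is_pow2_floor (if is_pow2 (Suc n) then Suc n else a) (Suc n)"
proof (cases "is_pow2 (Suc n)")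
  case True
  then show ?thesis by (simp add: is_pow2_floor_def)
next
  case False
  have "is_pow2 1" unfolding is_pow2_def by (rule exI[of _ 0]) simp
  with False assms have a: "is_pow2 a" "a \<le> n" "n < 2 * a"
    by (auto simp: is_pow2_floor_def)
  then have "is_pow2 (2 * a)" unfolding is_pow2_def by (metis power_Suc)
  with False have "Suc n \<noteq> 2 * a" by auto
  with False a show ?thesis by (simp add: is_pow2_floor_def)
qed

lemma sum_is_pow2_floor:
  assumes "finite A" "\<And>i. i \<in> A \<Longrightarrow> is_pow2_floor (a i) (n i)"
  shows "sum a A \<le> sum n A" "0 < sum n A \<Longrightarrow> sum n A < 2 * sum a A"
proof -
  have bounds: "a i \<le> n i" "n i \<le> 2 * a i" "0 < n i \<Longrightarrow> n i < 2 * a i" if "i \<in> A" for i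
    using assms(2)[OF that] by (auto simp: is_pow2_floor_def)
  show "sum a A \<le> sum n A"
    using bounds(1) by (rule sum_mono)
  assume "0 < sum n A"
  then obtain i where "i \<in> A" "0 < n i"
    by (metis sum.neutral neq0_conv less_irrefl)
  then have "sum n A < sum (\<lambda>i. 2 * a i) A"
    using assms(1) bounds by (intro sum_strict_mono_ex1) auto
  then show "sum n A < 2 * sum a A"
    by (simp add: sum_distrib_left)
qed

definition counters_inv :: "nat \<Rightarrow> st \<Rightarrow> bool" where
  "counters_inv k s \<longleftrightarrow> ntot s = (\<Sum>i<k. nloc s i) \<and> srv_sum s = (\<Sum>i<k. srv_n s i) \<and>
     (\<forall>i. is_pow2_floor (srv_n s i) (nloc s i) \<and> nbar s i \<le> nloc s i)"

lemma counters_inv_adv_upd [simp]: "counters_inv k (adv_upd k' s) = counters_inv k s"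
  by (simp add: counters_inv_def)

lemma counters_inv_srv_sum:
  assumes "counters_inv k s"
  shows "srv_sum s \<le> ntot s" "0 < ntot s \<Longrightarrow> ntot s < 2 * srv_sum s"
  using assms sum_is_pow2_floor[of "{..<k}" "srv_n s" "nloc s"]
  by (auto simp: counters_inv_def)

lemma counters_inv_doubling:
  assumes inv: "counters_inv k s" and site: "adv_site s < k"
    and db: "doubling (report_state k s c) (adv_site s) = (s', bd)"
  shows "counters_inv k s'"
proof -
  define i where "i = adv_site s"
  define m where "m = Suc (nloc s i)"
  note du = doubling_unchanged[OF db] and dc = doubling_counters[OF db]
  have i: "i \<in> {..<k}" using site by (simp add: i_def)
  have nloc': "nloc s' = (nloc s)(i := m)"
    using du(1) by (simp add: i_def m_def)
  have srv_n': "srv_n s' = (if is_pow2 m then (srv_n s)(i := m) else srv_n s)"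
    using dc(1) by (simp add: i_def m_def)
  have srv_sum': "srv_sum s' = (if is_pow2 m then srv_sum s + m - srv_n s i else srv_sum s)"
    using dc(2) by (simp add: i_def m_def)
  have "ntot s' = (\<Sum>j<k. nloc s' j)"
    using inv sum_fun_upd[OF _ i, of "nloc s" m] du(2)
    by (simp add: counters_inv_def nloc' m_def)
  moreover have "srv_sum s' = (\<Sum>j<k. srv_n s' j)"
    using inv sum_fun_upd[OF _ i, of "srv_n s" m]
    by (auto simp: counters_inv_def srv_n' srv_sum')
  moreover have "is_pow2_floor (srv_n s' j) (nloc s' j)" for j
    using inv is_pow2_floor_Suc[of "srv_n s i" "nloc s i"]
    by (cases "j = i") (auto simp: counters_inv_def nloc' srv_n' m_def)
  moreover have "nbar s' j \<le> nloc s' j" for j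
    using inv du(3) by (auto simp: counters_inv_def nloc' m_def i_def le_SucI)
  ultimately show ?thesis
    by (simp add: counters_inv_def)
qed

definition reachable_inv :: "nat \<Rightarrow> real \<Rightarrow> st \<Rightarrow> bool" where
  "reachable_inv k eps s \<longleftrightarrow> adv_site s < k \<and> adv_last s = pub s \<and> counters_inv k s \<and>
     (round_start s \<longrightarrow> pp s = newp k eps (srv_sum s) \<and> tau s = srv_sum s \<and>
        (pp s < 1 \<longrightarrow> nhat_consistent s))"

lemma reachable_inv_init: "1 \<le> k \<Longrightarrow> reachable_inv k eps init_st"
  by (simp add: reachable_inv_def counters_inv_def is_pow2_floor_def init_st_def)

lemma reachable_inv_step:
  assumes inv: "reachable_inv k eps s" and k: "1 \<le> k" and st: "(c, s') \<in> set_pmf (step k eps s)"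
  shows "reachable_inv k eps s'"
proof -
  obtain s3 bd s4 where db: "doubling (report_state k s c) (adv_site s) = (s3, bd)"
    and s4: "if bd then s4 \<in> set_pmf (boundary k eps s3) else s4 = s3" and s': "s' = adv_upd k s4"
    using st by (rule set_pmf_stepE)
  note du = doubling_unchanged[OF db] and dc = doubling_counters[OF db]
  have site: "adv_site s4 < k"
    using inv s4 du(7) by (cases bd) (auto simp: reachable_inv_def dest: boundary_fields)
  have c3: "counters_inv k s3"
    using inv db by (auto simp: reachable_inv_def intro: counters_inv_doubling)
  have "counters_inv k s4"
  proof (cases bd)
    case True
    then have b: "s4 \<in> set_pmf (boundary k eps s3)" using s4 by simp
    show ?thesis
      using c3 boundary_fields(1-4)[OF b] boundary_fields(11)[OF b]
      by (auto simp: counters_inv_def intro: order_trans)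
  qed (use s4 c3 in simp)
  moreover have "round_start s4 \<longrightarrow> pp s4 = newp k eps (srv_sum s4) \<and> tau s4 = srv_sum s4 \<and>
      (pp s4 < 1 \<longrightarrow> nhat_consistent s4)"
  proof (cases bd)
    case True
    then have b: "s4 \<in> set_pmf (boundary k eps s3)" using s4 by simp
    show ?thesis
      using True dc(3) boundary_fields(4,5,9,10,12)[OF b] by simp
  qed (use s4 du(9) in simp)
  moreover have "adv_site (adv_upd k s4) < k"
    using site k by simp
  ultimately show ?thesis
    unfolding s' reachable_inv_def by simp
qed

section \<open>The window after a round start\<close>

definition pub_synced :: "nat \<Rightarrow> st \<Rightarrow> bool" where
  "pub_synced k s \<longleftrightarrow> pub s = (\<Sum>j<k. nhat s j)"

lemma nhat_consistent_report_state:
  "nhat_consistent s \<Longrightarrow> nhat_consistent (report_state k s c)"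
  by (auto simp: nhat_consistent_def)

lemma pub_synced_report_state:
  "pub_synced k (report_state k s True)" "pub_synced k (report_state k s False) = pub_synced k s"
  by (simp_all add: pub_synced_def)

lemma report_increases_pub:
  assumes cons: "nhat_consistent s" and le: "nbar s (adv_site s) \<le> nloc s (adv_site s)"
    and p: "0 < pp s" and sync: "pub_synced k s" and site: "adv_site s < k"
  shows "pub s < pub (report_state k s True)"
proof -
  define i where "i = adv_site s"
  have "nhat s i < real (nloc s i) + 1 / pp s"
    using cons le p by (auto simp: nhat_consistent_def i_def intro: add_nonneg_pos)
  moreover have "pub (report_state k s True) + nhat s i = pub s + (real (nloc s i) + 1 / pp s)"
    using sync sum_fun_upd[of "{..<k}" i "nhat s"] site by (simp add: pub_synced_def i_def)
  ultimately show ?thesis by linarith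
qed

locale hyz_window =
  fixes k :: nat and eps :: real and n0 :: nat
  assumes k_ge_1: "1 \<le> k" and eps_pos: "0 < eps" and n0_ge: "4 * sqrt (real k) / eps \<le> real n0"
begin

definition scale :: real where
  "scale = sqrt (real k) / eps"

lemma scale_pos: "0 < scale"
  using k_ge_1 eps_pos by (simp add: scale_def)

lemma n0_ge_scale: "4 * scale \<le> real n0"
  using n0_ge by (simp add: scale_def)

lemma newp_bounds:
  assumes t: "2 * scale < real t"
  shows "scale / (2 * real t) < newp k eps t" "newp k eps t \<le> 1/4"
proof -
  define x where "x = scale / real t"
  have x: "0 < x" "x < 1/2"
    using t scale_pos by (auto simp: x_def field_simps)
  define f where "f = \<lfloor>log 2 x\<rfloor>"
  have "log 2 x < log 2 (1/2)"
    using x by simp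
  then have f: "f \<le> -2" "log 2 x - 1 < real_of_int f"
    unfolding f_def by (simp_all add: log_divide)
  have newp: "newp k eps t = 2 powr real_of_int f"
    using f(1) by (simp add: newp_def f_def x_def scale_def field_simps min_def)
  have "2 powr real_of_int f \<le> 2 powr (-2)"
    using f(1) by (intro powr_mono) auto
  then show "newp k eps t \<le> 1/4"
    by (simp add: newp powr_minus powr_numeral)
  have "x / 2 = 2 powr (log 2 x - 1)"
    using x by (simp add: powr_diff)
  also have "\<dots> < newp k eps t"
    unfolding newp using f(2) by (rule powr_less_mono) simp
  finally show "scale / (2 * real t) < newp k eps t"
    by (simp add: x_def)
qed

definition window_inv :: "st \<Rightarrow> bool" where
  "window_inv s \<longleftrightarrow> reachable_inv k eps s \<and> n0 \<le> ntot s \<and> ntot s \<le> 2 * n0 \<and>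
     n0 < 2 * tau s \<and> pp s = newp k eps (tau s) \<and> nhat_consistent s"

lemma pp_window:
  assumes "window_inv s"
  shows "scale / (2 * real (tau s)) < pp s" "pp s \<le> 1/4" "0 < pp s"
proof -
  have "2 * scale < real (tau s)"
    using assms n0_ge_scale scale_pos by (simp add: window_inv_def)
  then show "scale / (2 * real (tau s)) < pp s" "pp s \<le> 1/4"
    using assms newp_bounds by (simp_all add: window_inv_def)
  moreover have "0 < scale / (2 * real (tau s))"
    using scale_pos \<open>2 * scale < real (tau s)\<close> by simp
  ultimately show "0 < pp s"
    by linarith
qed

lemma window_inv_step:
  assumes w: "window_inv s" and lt: "ntot s < 2 * n0" and st: "(c, s') \<in> set_pmf (step k eps s)"
  shows "window_inv s'" "tau s' = tau s \<or> 2 * tau s \<le> tau s' \<and> tau s' \<le> ntot s'"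
proof -
  note f = set_pmf_step_fields[OF st]
  have inv': "reachable_inv k eps s'"
    using w k_ge_1 st by (auto simp: window_inv_def intro: reachable_inv_step)
  have ntot': "n0 \<le> ntot s'" "ntot s' \<le> 2 * n0"
    using w lt f(1) by (auto simp: window_inv_def)
  have "window_inv s' \<and> (tau s' = tau s \<or> 2 * tau s \<le> tau s' \<and> tau s' \<le> ntot s')"
  proof (cases "round_start s'")
    case True
    then have tau': "tau s' = srv_sum s'" "pp s' = newp k eps (tau s')"
      "pp s' < 1 \<Longrightarrow> nhat_consistent s'"
      using inv' by (auto simp: reachable_inv_def)
    have "counters_inv k s'"
      using inv' by (simp add: reachable_inv_def)
    then have "tau s' \<le> ntot s'"
      using counters_inv_srv_sum(1) tau'(1) by simp
    moreover have "n0 < tau s'"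
      using w f(5)[OF True] by (simp add: window_inv_def)
    moreover have "pp s' < 1"
      using newp_bounds(2)[of "tau s'"] tau'(2) \<open>n0 < tau s'\<close> n0_ge_scale scale_pos by simp
    ultimately show ?thesis
      using inv' ntot' tau' f(5)[OF True] by (simp add: window_inv_def)
  next
    case False
    then show ?thesis
      using w inv' ntot' f(6) nhat_consistent_report_state
      by (auto simp: window_inv_def nhat_consistent_def)
  qed
  then show "window_inv s'" "tau s' = tau s \<or> 2 * tau s \<le> tau s' \<and> tau s' \<le> ntot s'"
    by blast+
qed

end

section \<open>Reports reach consecutive sites\<close>

fun exec_count :: "nat \<Rightarrow> real \<Rightarrow> nat \<Rightarrow> st \<Rightarrow> (nat set \<times> nat \<times> st) pmf" where
  "exec_count k eps 0 s = return_pmf ({}, 0, s)"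
| "exec_count k eps (Suc m) s = bind_pmf (step k eps s) (\<lambda>(c, s1).
      map_pmf (\<lambda>(R, r, s2). ((if c then {adv_site s} else {}) \<union> R, (if c then 1 else 0) + r, s2))
        (exec_count k eps m s1))"

lemma exec_eq_map_exec_count:
  "exec k eps m s = map_pmf (\<lambda>(R, r, s'). (R, s')) (exec_count k eps m s)"
proof (induction m arbitrary: s)
  case (Suc m)
  then show ?case
    by (auto simp: map_bind_pmf pmf.map_comp o_def split_beta intro!: bind_pmf_cong)
qed simp

lemma set_pmf_exec_count_SucE:
  assumes "x \<in> set_pmf (exec_count k eps (Suc m) s)"
  obtains c s1 R r s' where "(c, s1) \<in> set_pmf (step k eps s)"
    "(R, r, s') \<in> set_pmf (exec_count k eps m s1)"
    "x = ((if c then {adv_site s} else {}) \<union> R, (if c then 1 else 0) + r, s')"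
  using assms by (auto simp: split_beta)

lemma exec_count_reachable:
  assumes "reachable_inv k eps s" "1 \<le> k" "(R, r, s') \<in> set_pmf (exec_count k eps m s)"
  shows "reachable_inv k eps s'" "ntot s' = ntot s + m" "R \<subseteq> {..<k}" "r = 0 \<longleftrightarrow> R = {}"
proof -
  have "reachable_inv k eps s' \<and> ntot s' = ntot s + m \<and> R \<subseteq> {..<k} \<and> (r = 0 \<longleftrightarrow> R = {})"
    using assms
  proof (induction m arbitrary: s R r s')
    case (Suc m)
    obtain c s1 R1 r1 where st: "(c, s1) \<in> set_pmf (step k eps s)"
      and x: "(R1, r1, s') \<in> set_pmf (exec_count k eps m s1)"
      and R: "R = (if c then {adv_site s} else {}) \<union> R1" and r: "r = (if c then 1 else 0) + r1"
      using set_pmf_exec_count_SucE[OF Suc.prems(3)] by (metis prod.inject)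
    have "reachable_inv k eps s1"
      using Suc.prems(1,2) st by (rule reachable_inv_step)
    then have "reachable_inv k eps s' \<and> ntot s' = ntot s1 + m \<and> R1 \<subseteq> {..<k} \<and> (r1 = 0 \<longleftrightarrow> R1 = {})"
      using Suc.IH Suc.prems(2) x by blast
    then show ?case
      using Suc.prems(1) set_pmf_step_fields(1)[OF st] R r by (auto simp: reachable_inv_def)
  qed simp
  then show "reachable_inv k eps s'" "ntot s' = ntot s + m" "R \<subseteq> {..<k}" "r = 0 \<longleftrightarrow> R = {}"
    by simp_all
qed

definition arc :: "nat \<Rightarrow> nat \<Rightarrow> nat \<Rightarrow> nat set" where
  "arc k u d = (\<lambda>j. (u + j) mod k) ` {..<d}"

lemma card_arc:
  assumes "d \<le> k"
  shows "card (arc k u d) = d"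
proof -
  have "inj_on (\<lambda>j. (u + j) mod k) {..<d}"
  proof (rule inj_onI)
    fix i j assume "i \<in> {..<d}" "j \<in> {..<d}" "(u + i) mod k = (u + j) mod k"
    then show "i = j"
      using assms cong_add_lcancel_nat[of u i j k] cong_less_modulus_unique_nat[of i j k]
      by (simp add: cong_def)
  qed
  then show ?thesis
    by (simp add: arc_def card_image)
qed

lemma arc_mono: "d \<le> d' \<Longrightarrow> arc k u d \<subseteq> arc k u d'"
  unfolding arc_def by auto

lemma arc_Suc: "arc k u (Suc d) = insert ((u + d) mod k) (arc k u d)"
  unfolding arc_def by (auto simp: lessThan_Suc)

context hyz_window
begin

text \<open>
  Reports that may still fail to move the adversary: one while the published estimate is
  stale, as it is right after a round start, and one for the new round that may start
  inside the window, the only other event that makes it stale.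
\<close>
definition adv_slack :: "st \<Rightarrow> nat" where
  "adv_slack s = (if pub_synced k s then 0 else 1) + (if tau s \<le> n0 then 1 else 0)"

lemma adversary_progress:
  assumes w: "window_inv s" and lt: "ntot s < 2 * n0" and st: "(c, s') \<in> set_pmf (step k eps s)"
  shows "adv_site s' = (if pub s' \<noteq> pub s then (adv_site s + 1) mod k else adv_site s)"
    "pub s' \<noteq> pub s \<Longrightarrow> c"
    "adv_slack s' + (if c \<and> pub s' = pub s then 1 else 0) \<le> adv_slack s"
proof -
  note f = set_pmf_step_fields[OF st]
  have inv: "reachable_inv k eps s"
    using w by (simp add: window_inv_def)
  show "adv_site s' = (if pub s' \<noteq> pub s then (adv_site s + 1) mod k else adv_site s)"
    using f(4) inv by (simp add: reachable_inv_def)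
  show "pub s' \<noteq> pub s \<Longrightarrow> c"
    using f(2) by (cases c) simp_all
  have moves: "pub s < pub s'" if "c" "pub_synced k s"
    using report_increases_pub[of s k] f(2) that w pp_window(3)[OF w] inv
    by (auto simp: window_inv_def reachable_inv_def counters_inv_def)
  show "adv_slack s' + (if c \<and> pub s' = pub s then 1 else 0) \<le> adv_slack s"
  proof (cases "round_start s'")
    case True
    have "tau s \<le> n0" "n0 < tau s'"
      using f(5)[OF True] window_inv_step[OF w lt st] w by (auto simp: window_inv_def)
    then show ?thesis
      using moves by (auto simp: adv_slack_def)
  next
    case False
    then have "tau s' = tau s" "pub_synced k s' = pub_synced k (report_state k s c)"
      using f(2,6) by (auto simp: pub_synced_def)
    then show ?thesis
      using moves pub_synced_report_state by (cases c) (auto simp: adv_slack_def)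
  qed
qed

lemma exec_count_covers_arc:
  assumes "window_inv s" "ntot s + m = 2 * n0" "arc k u d \<subseteq> A" "adv_site s = (u + d) mod k"
    "(R, r, s') \<in> set_pmf (exec_count k eps m s)"
  shows "\<exists>d'. arc k u d' \<subseteq> A \<union> R \<and> d + r \<le> d' + adv_slack s"
  using assms
proof (induction m arbitrary: s A d R r s')
  case (Suc m)
  obtain c s1 R1 r1 where st: "(c, s1) \<in> set_pmf (step k eps s)"
    and x: "(R1, r1, s') \<in> set_pmf (exec_count k eps m s1)"
    and R: "R = (if c then {adv_site s} else {}) \<union> R1" and r: "r = (if c then 1 else 0) + r1"
    using set_pmf_exec_count_SucE[OF Suc.prems(5)] by (metis prod.inject)
  have lt: "ntot s < 2 * n0"
    using Suc.prems(2) by simp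
  note progress = adversary_progress[OF Suc.prems(1) lt st]
  define d1 where "d1 = (if pub s1 \<noteq> pub s then Suc d else d)"
  define A1 where "A1 = A \<union> (if c then {adv_site s} else {})"
  have "arc k u d1 \<subseteq> A1" "adv_site s1 = (u + d1) mod k"
    using Suc.prems(3,4) progress(1,2) by (auto simp: d1_def A1_def arc_Suc mod_Suc_eq)
  moreover have "window_inv s1" "ntot s1 + m = 2 * n0"
    using window_inv_step[OF Suc.prems(1) lt st] set_pmf_step_fields(1)[OF st] Suc.prems(2)
    by simp_all
  ultimately obtain d' where d': "arc k u d' \<subseteq> A1 \<union> R1" "d1 + r1 \<le> d' + adv_slack s1"
    using Suc.IH x by blast
  have "A1 \<union> R1 = A \<union> R"
    by (auto simp: A1_def R)
  moreover have "d + r \<le> d' + adv_slack s"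
    using d'(2) progress(3) by (auto simp: d1_def r split: if_splits)
  ultimately show ?case
    using d'(1) by auto
qed auto

lemma exec_count_covers:
  assumes w: "window_inv s" and m: "ntot s + m = 2 * n0"
    and x: "(R, r, s') \<in> set_pmf (exec_count k eps m s)"
  shows "card R = 0 \<longleftrightarrow> r = 0" "card R = k \<or> r \<le> card R + 2"
proof -
  have site: "adv_site s < k" and R: "R \<subseteq> {..<k}" and "r = 0 \<longleftrightarrow> R = {}"
    using w exec_count_reachable(3,4)[OF _ k_ge_1 x] by (auto simp: window_inv_def reachable_inv_def)
  moreover have "finite R"
    using R finite_subset by blast
  ultimately show "card R = 0 \<longleftrightarrow> r = 0"
    by simp
  obtain d where d: "arc k (adv_site s) d \<subseteq> R" "r \<le> d + adv_slack s"
    using exec_count_covers_arc[OF w m _ _ x, of "adv_site s" 0 "{}"] site by (auto simp: arc_def)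
  have "min d k = card (arc k (adv_site s) (min d k))"
    by (simp add: card_arc)
  also have "\<dots> \<le> card R"
    using d(1) arc_mono[of "min d k" d] R by (intro card_mono) (auto intro: finite_subset)
  finally have "min d k \<le> card R" .
  moreover have "card R \<le> k"
    using R by (metis card_lessThan card_mono finite_lessThan)
  moreover have "adv_slack s \<le> 2"
    by (simp add: adv_slack_def)
  ultimately show "card R = k \<or> r \<le> card R + 2"
    using d(2) by (auto simp: min_def split: if_splits)
qed

end

section \<open>The report budget\<close>

text \<open>
  A lower bound, in units of \<open>\<surd>k/\<epsilon>\<close>, on the total report probability of the events
  still to come in the window \<open>(n\<^sub>0, 2n\<^sub>0]\<close> after \<open>N\<close> events under threshold
  \<open>t\<close>; every event contributes at least \<open>1/(2t)\<close>. Once \<open>N \<ge> 2t\<close> in the first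
  round, a new round may start at any moment with a threshold of at most \<open>N\<close>, whence
  the last branch.
\<close>
definition report_mass :: "nat \<Rightarrow> nat \<Rightarrow> nat \<Rightarrow> real" where
  "report_mass n0 N t =
     (if n0 < t then (2 * real n0 - real N) / (2 * real t)
      else if N \<le> 2 * t then (real n0 + real t - real N) / (2 * real t)
      else real n0 / real N - 1 / 2)"

lemma report_mass_start: "t \<le> n0 \<Longrightarrow> n0 < 2 * t \<Longrightarrow> report_mass n0 n0 t = 1 / 2"
  by (simp add: report_mass_def)

lemma report_mass_end: "n0 < 2 * t \<Longrightarrow> report_mass n0 (2 * n0) t \<le> 0"
  by (auto simp: report_mass_def)

lemma report_mass_nonneg: "N \<le> 2 * n0 \<Longrightarrow> n0 < 2 * t \<Longrightarrow> 0 \<le> report_mass n0 N t"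
  by (auto simp: report_mass_def field_simps)

lemma report_mass_doubled:
  "0 < t \<Longrightarrow> t \<le> n0 \<Longrightarrow> 2 * t \<le> N \<Longrightarrow> report_mass n0 N t = real n0 / real N - 1 / 2"
  by (cases "N = 2 * t") (auto simp: report_mass_def field_simps)

lemma report_mass_le_doubled:
  assumes t: "0 < t" "t \<le> n0" and N: "n0 \<le> N" "2 * t \<le> N + 1"
  shows "report_mass n0 N t \<le> 1 / (2 * real t) + (real n0 / real (N + 1) - 1 / 2)"
proof (cases "N + 1 = 2 * t")
  case True
  then have "report_mass n0 N t = (real n0 + real t - real N) / (2 * real t)"
    using t by (simp add: report_mass_def)
  moreover have "real N = 2 * real t - 1" "real (N + 1) = 2 * real t"
    using arg_cong[OF True, of real] by simp_all
  ultimately show ?thesis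
    using t by (simp add: field_simps)
next
  case False
  with N have N2: "2 * t \<le> N" by simp
  have "real n0 * (2 * real t) \<le> real N * (real N + 1)"
  proof -
    have "real n0 * (2 * real t) \<le> real N * real N"
      using N N2 by (intro mult_mono) auto
    then show ?thesis by (simp add: algebra_simps)
  qed
  moreover have "0 < real N"
    using t N2 by simp
  ultimately have "real n0 / real N - real n0 / real (N + 1) = real n0 / (real N * (real N + 1))"
    "real n0 / (real N * (real N + 1)) \<le> 1 / (2 * real t)"
    using t by (simp add: field_simps, simp add: divide_simps)
  then show ?thesis
    using report_mass_doubled[OF t N2] by linarith
qed

lemma report_mass_step:
  assumes N: "n0 \<le> N" "N < 2 * n0" and t: "n0 < 2 * t"
    and t': "t' = t \<or> 2 * t \<le> t' \<and> t' \<le> N + 1"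
  shows "report_mass n0 N t - report_mass n0 (N + 1) t' \<le> 1 / (2 * real t)"
proof -
  have "0 < t" using t by simp
  consider "t' = t" "n0 < t" | "t' = t" "t \<le> n0" "N + 1 \<le> 2 * t"
    | "t' = t" "t \<le> n0" "2 * t \<le> N" | "2 * t \<le> t'" "t' \<le> N + 1"
    using t' by linarith
  then show ?thesis
  proof cases
    case 1
    then show ?thesis by (simp add: report_mass_def diff_divide_distrib[symmetric])
  next
    case 2
    then show ?thesis by (auto simp: report_mass_def diff_divide_distrib[symmetric])
  next
    case 3
    then show ?thesis
      using report_mass_le_doubled[OF \<open>0 < t\<close>, of n0 N] report_mass_doubled[OF \<open>0 < t\<close>, of n0 "N + 1"] N
      by simp
  next
    case 4
    have "t \<le> n0" "n0 < t'" using 4 N t by linarith+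
    have "real n0 / real (N + 1) - 1 / 2 = (2 * real n0 - real (N + 1)) / (2 * real (N + 1))"
      by (simp add: field_simps)
    also have "\<dots> \<le> (2 * real n0 - real (N + 1)) / (2 * real t')"
      using 4 N \<open>n0 < t'\<close> by (intro divide_left_mono) auto
    also have "\<dots> = report_mass n0 (N + 1) t'"
      using \<open>n0 < t'\<close> by (simp add: report_mass_def)
    finally show ?thesis
      using report_mass_le_doubled[OF \<open>0 < t\<close> \<open>t \<le> n0\<close> N(1)] 4 by linarith
  qed
qed

lemma nn_integral_step_le:
  assumes p: "0 \<le> pp s" "pp s \<le> 1"
    and f: "\<And>c s'. (c, s') \<in> set_pmf (step k eps s) \<Longrightarrow> f (c, s') \<le> ennreal (if c then B1 else B0)"
    and B: "0 \<le> B1" "0 \<le> B0"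
  shows "(\<integral>\<^sup>+x. f x \<partial>step k eps s) \<le> ennreal (pp s * B1 + (1 - pp s) * B0)"
proof -
  have "(\<integral>\<^sup>+x. f x \<partial>step k eps s) \<le> (\<integral>\<^sup>+x. ennreal (if fst x then B1 else B0) \<partial>step k eps s)"
    using f by (intro nn_integral_mono_AE) (force simp: AE_measure_pmf_iff)
  also have "\<dots> = (\<integral>\<^sup>+c. ennreal (if c then B1 else B0) \<partial>bernoulli_pmf (pp s))"
    unfolding step_eq_server_update by (simp add: measure_pmf.emeasure_space_1)
  also have "\<dots> = ennreal (pp s * B1 + (1 - pp s) * B0)"
    using p B by (simp add: ennreal_mult' ennreal_plus[symmetric] mult.commute)
  finally show ?thesis .
qed

context hyz_window
begin

definition budget :: "st \<Rightarrow> real" where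
  "budget s = scale * report_mass n0 (ntot s) (tau s)"

lemma budget_step:
  assumes w: "window_inv s" and lt: "ntot s < 2 * n0" and st: "(c, s') \<in> set_pmf (step k eps s)"
  shows "budget s - pp s \<le> budget s'" "0 \<le> budget s'"
proof -
  have w': "window_inv s'" and tau': "tau s' = tau s \<or> 2 * tau s \<le> tau s' \<and> tau s' \<le> ntot s'"
    using window_inv_step[OF w lt st] by blast+
  have ntot': "ntot s' = ntot s + 1"
    using set_pmf_step_fields(1)[OF st] by simp
  have "report_mass n0 (ntot s) (tau s) - report_mass n0 (ntot s') (tau s') \<le> 1 / (2 * real (tau s))"
    using report_mass_step[of n0 "ntot s" "tau s" "tau s'"] w lt tau' ntot'
    by (simp add: window_inv_def)
  then have "budget s - budget s' \<le> scale * (1 / (2 * real (tau s)))"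
    using scale_pos unfolding budget_def right_diff_distrib[symmetric] by (intro mult_left_mono) auto
  then show "budget s - pp s \<le> budget s'"
    using pp_window(1)[OF w] by simp
  show "0 \<le> budget s'"
    using w' report_mass_nonneg scale_pos by (simp add: budget_def window_inv_def)
qed

text \<open>
  \<open>V\<close> is a supermartingale majorant: an event is reported with probability \<open>p\<close> and
  uses up at most \<open>p\<close> of the budget.
\<close>
lemma exec_count_potential_bound:
  fixes G :: "'i \<Rightarrow> nat \<Rightarrow> real" and V :: "'i \<Rightarrow> real \<Rightarrow> real" and sh :: "'i \<Rightarrow> 'i"
  assumes G_Suc: "\<And>i r. G i (Suc r) = G (sh i) r"
    and G_0: "\<And>i. G i 0 \<le> V i 0"
    and V_step: "\<And>i lam p. 0 \<le> lam \<Longrightarrow> 0 < p \<Longrightarrow> p \<le> 1/4 \<Longrightarrow>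
        (1 - p) * V i (max 0 (lam - p)) + p * V (sh i) (max 0 (lam - p)) \<le> V i lam"
    and V_nonneg: "\<And>i lam. 0 \<le> lam \<Longrightarrow> 0 \<le> V i lam"
  shows "window_inv s \<Longrightarrow> ntot s + m = 2 * n0 \<Longrightarrow> 0 \<le> lam \<Longrightarrow> lam \<le> budget s \<Longrightarrow>
    (\<integral>\<^sup>+x. ennreal (G i (fst (snd x))) \<partial>exec_count k eps m s) \<le> ennreal (V i lam)"
proof (induction m arbitrary: s i lam)
  case 0
  then have "budget s \<le> 0"
    using report_mass_end[of n0 "tau s"] scale_pos
    by (simp add: budget_def window_inv_def mult_nonneg_nonpos)
  with 0 have "lam = 0" by simp
  then show ?case
    using G_0[of i] by (simp add: ennreal_leI)
next
  case (Suc m)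
  define lam' where "lam' = max 0 (lam - pp s)"
  have lt: "ntot s < 2 * n0"
    using Suc.prems(2) by simp
  note p = pp_window[OF Suc.prems(1)]
  have IH: "(\<integral>\<^sup>+y. ennreal (G i' (fst (snd y))) \<partial>exec_count k eps m s') \<le> ennreal (V i' lam')"
    if "(c, s') \<in> set_pmf (step k eps s)" for c s' i'
    using Suc.IH[of s' lam' i'] window_inv_step(1)[OF Suc.prems(1) lt that]
      budget_step[OF Suc.prems(1) lt that] set_pmf_step_fields(1)[OF that] Suc.prems(2,4)
    by (simp add: lam'_def)
  have "(\<integral>\<^sup>+x. ennreal (G i (fst (snd x))) \<partial>exec_count k eps (Suc m) s)
      = (\<integral>\<^sup>+x. (case x of (c, s') \<Rightarrow>
          \<integral>\<^sup>+y. ennreal (G i ((if c then 1 else 0) + fst (snd y))) \<partial>exec_count k eps m s') \<partial>step k eps s)"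
    by (simp add: split_beta)
  also have "\<dots> \<le> ennreal (pp s * V (sh i) lam' + (1 - pp s) * V i lam')"
    using p IH by (intro nn_integral_step_le) (auto simp: G_Suc lam'_def intro: V_nonneg)
  also have "\<dots> \<le> ennreal (V i lam)"
    using V_step[of lam "pp s" i] Suc.prems(3) p by (intro ennreal_leI) (simp add: lam'_def algebra_simps)
  finally show ?case .
qed

end

section \<open>Tail bounds for the number of reports\<close>

definition exp_taylor :: "nat \<Rightarrow> real \<Rightarrow> real" where
  "exp_taylor n y = (\<Sum>i\<le>n. y ^ i / fact i)"

lemma exp_taylor_le_exp:
  assumes "0 \<le> y"
  shows "exp_taylor n y \<le> exp y"
proof -
  have "(\<Sum>i<Suc n. inverse (fact i) * y ^ i) \<le> (\<Sum>i. inverse (fact i) * y ^ i)"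
    using assms by (intro sum_le_suminf[OF summable_exp]) auto
  then show ?thesis
    by (simp add: exp_taylor_def exp_def lessThan_Suc_atMost field_simps)
qed

lemma exp_taylor_0 [simp]: "exp_taylor 0 y = 1"
  by (simp add: exp_taylor_def)

lemma exp_taylor_at_0 [simp]: "exp_taylor n 0 = 1"
  by (induction n) (simp_all add: exp_taylor_def)

lemma exp_taylor_Suc: "exp_taylor (Suc n) y = exp_taylor n y + y ^ Suc n / fact (Suc n)"
  by (simp add: exp_taylor_def)

lemma exp_taylor_nonneg: "0 \<le> y \<Longrightarrow> 0 \<le> exp_taylor n y"
  unfolding exp_taylor_def by (intro sum_nonneg) auto

lemma exp_taylor_ge_linear: "0 \<le> y \<Longrightarrow> 1 + y \<le> exp_taylor (Suc n) y"
  by (induction n) (simp_all add: exp_taylor_Suc exp_taylor_def add_increasing2)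

lemma power_Suc_add_ge:
  fixes a b :: real
  assumes "0 \<le> a" "0 \<le> b"
  shows "a ^ Suc n + real (Suc n) * b * a ^ n \<le> (a + b) ^ Suc n"
proof (induction n)
  case (Suc n)
  have "a ^ Suc (Suc n) + real (Suc (Suc n)) * b * a ^ Suc n
      \<le> (a + b) * (a ^ Suc n + real (Suc n) * b * a ^ n)"
    using assms by (simp add: algebra_simps)
  also have "\<dots> \<le> (a + b) * (a + b) ^ Suc n"
    using Suc assms by (intro mult_left_mono) auto
  finally show ?case by simp
qed simp

lemma exp_taylor_shift:
  assumes "0 \<le> a" "0 \<le> b"
  shows "exp_taylor (Suc n) a + b * exp_taylor n a \<le> exp_taylor (Suc n) (a + b)"
proof -
  have termwise: "a ^ Suc i / fact (Suc i) + b * (a ^ i / fact i) \<le> (a + b) ^ Suc i / fact (Suc i)" for i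
  proof -
    have "a ^ Suc i / fact (Suc i) + b * (a ^ i / fact i)
        = (a ^ Suc i + real (Suc i) * b * a ^ i) / fact (Suc i)"
      by (simp add: field_simps del: of_nat_Suc)
    also have "\<dots> \<le> (a + b) ^ Suc i / fact (Suc i)"
      using power_Suc_add_ge[OF assms] by (intro divide_right_mono) auto
    finally show ?thesis .
  qed
  have shift: "exp_taylor (Suc n) y = 1 + (\<Sum>i\<le>n. y ^ Suc i / fact (Suc i))" for y
    unfolding exp_taylor_def sum.atMost_Suc_shift by simp
  have "exp_taylor (Suc n) a + b * exp_taylor n a
      = 1 + (\<Sum>i\<le>n. a ^ Suc i / fact (Suc i) + b * (a ^ i / fact i))"
    by (simp only: shift) (simp add: exp_taylor_def sum.distrib sum_distrib_left)
  also have "\<dots> \<le> 1 + (\<Sum>i\<le>n. (a + b) ^ Suc i / fact (Suc i))"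
    using termwise by (intro add_left_mono sum_mono) auto
  also have "\<dots> = exp_taylor (Suc n) (a + b)"
    by (simp add: shift)
  finally show ?thesis .
qed

lemma one_minus_mult_exp_le: "(1 - p) * exp p \<le> (1::real)"
proof -
  have "(1 - p) * exp p \<le> exp (- p) * exp p"
    using exp_ge_add_one_self[of "- p"] by (intro mult_right_mono) auto
  then show ?thesis
    by (simp add: exp_minus)
qed

lemma exp_le_linear_quarter:
  fixes x :: real
  assumes "0 \<le> x" "x \<le> 1/4"
  shows "exp x \<le> 1 + 5/4 * x"
proof -
  have "exp x \<le> 1 + x + x\<^sup>2"
    using exp_bound[of x] assms by simp
  moreover have "x\<^sup>2 \<le> x / 4"
    using assms by (simp add: power2_eq_square mult_left_mono[of x "1/4" x, simplified])
  ultimately show ?thesis by simp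
qed

lemma exp_taylor_step:
  assumes mu: "0 \<le> mu" and p: "0 < p" "p \<le> 1/4"
  shows "exp p * ((1 - p) * exp_taylor (Suc n) (5/4 * mu) + p * exp_taylor n (5/4 * mu))
    \<le> exp_taylor (Suc n) (5/4 * (mu + p))"
proof -
  define X Y where "X = exp_taylor (Suc n) (5/4 * mu)" and "Y = exp_taylor n (5/4 * mu)"
  have XY: "0 \<le> Y" "Y \<le> X"
    using mu by (simp_all add: X_def Y_def exp_taylor_nonneg exp_taylor_Suc)
  have "(exp p * (1 - p) - 1) * X \<le> (exp p * (1 - p) - 1) * Y"
    using one_minus_mult_exp_le[of p] XY by (intro mult_left_mono_neg) (auto simp: mult.commute)
  moreover have "(exp p - 1 - 5/4 * p) * Y \<le> 0"
    using exp_le_linear_quarter[of p] p XY by (intro mult_nonpos_nonneg) auto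
  ultimately have "exp p * ((1 - p) * X + p * Y) \<le> X + 5/4 * p * Y"
    by (simp add: algebra_simps)
  also have "\<dots> \<le> exp_taylor (Suc n) (5/4 * (mu + p))"
    using exp_taylor_shift[of "5/4 * mu" "5/4 * p" n] mu p
    by (simp add: X_def Y_def distrib_left mult.assoc)
  finally show ?thesis
    by (simp add: X_def Y_def)
qed

text \<open>
  A Poisson tail with the mean inflated by \<open>5/4\<close>, the price of \<open>exp p \<le> 1 + 5p/4\<close>
  for \<open>p \<le> 1/4\<close>. It is needed for \<open>8 \<le> k < 12\<close>, where the bound on
  \<open>E[2\<^sup>-\<^sup>r]\<close> is too weak.
\<close>
definition tail_bound :: "int \<Rightarrow> real \<Rightarrow> real" where
  "tail_bound j lam = (if j < 0 then 0 else exp (- lam) * exp_taylor (nat j) (5/4 * lam))"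

lemma tail_bound_nonneg: "0 \<le> lam \<Longrightarrow> 0 \<le> tail_bound j lam"
  by (simp add: tail_bound_def exp_taylor_nonneg)

lemma exp_taylor_step_max:
  assumes lam: "0 \<le> lam" and p: "0 < p" "p \<le> 1/4"
  shows "exp (- max 0 (lam - p)) * ((1 - p) * exp_taylor (Suc n) (5/4 * max 0 (lam - p))
      + p * exp_taylor n (5/4 * max 0 (lam - p))) \<le> exp (- lam) * exp_taylor (Suc n) (5/4 * lam)"
proof (cases "p \<le> lam")
  case True
  have "exp (- (lam - p)) = exp (- lam) * exp p"
    by (simp add: exp_add[symmetric])
  with True show ?thesis
    using exp_taylor_step[of "lam - p" p n] p by (simp add: mult.assoc mult_left_mono)
next
  case False
  have "1 = exp (- lam) * exp lam"
    by (simp add: exp_minus)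
  also have "\<dots> \<le> exp (- lam) * exp_taylor (Suc n) (5/4 * lam)"
    using exp_le_linear_quarter[of lam] exp_taylor_ge_linear[of "5/4 * lam" n] False lam p
    by (intro mult_left_mono) auto
  finally show ?thesis
    using False by simp
qed

lemma tail_bound_step:
  assumes lam: "0 \<le> lam" and p: "0 < p" "p \<le> 1/4"
  shows "(1 - p) * tail_bound j (max 0 (lam - p)) + p * tail_bound (j - 1) (max 0 (lam - p))
    \<le> tail_bound j lam"
proof -
  consider "j < 0" | "j = 0" | n where "j = int (Suc n)"
  proof (cases "j < 0")
    case False
    then obtain m where "j = int m"
      by (metis nonneg_int_cases not_less)
    then show ?thesis
      using that by (cases m) auto
  qed (use that in auto)
  then show ?thesis
  proof cases
    case 2
    have "(1 - p) * exp (- max 0 (lam - p)) \<le> (1 - p) * (exp (- lam) * exp p)"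
      using p by (intro mult_left_mono) (auto simp: exp_add[symmetric])
    also have "\<dots> \<le> exp (- lam)"
      using mult_right_mono[OF one_minus_mult_exp_le[of p], of "exp (- lam)"]
      by (simp add: algebra_simps)
    finally show ?thesis
      using 2 by (simp add: tail_bound_def)
  next
    case (3 n)
    then have "nat j = Suc n" "nat (j - 1) = n" "\<not> j < 0" "\<not> j - 1 < 0"
      by simp_all
    then show ?thesis
      using exp_taylor_step_max[OF assms, of n] by (simp add: tail_bound_def algebra_simps)
  qed (simp add: tail_bound_def)
qed

lemma half_power_exp_step:
  fixes p lam :: real
  shows "(1 - p) * ((1/2) ^ c * exp (- max 0 (lam - p) / 2))
     + p * ((1/2) ^ Suc c * exp (- max 0 (lam - p) / 2)) \<le> (1/2) ^ c * exp (- lam / 2)"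
proof -
  define lam' where "lam' = max 0 (lam - p)"
  have "(1 - p) * ((1/2) ^ c * exp (- lam' / 2)) + p * ((1/2) ^ Suc c * exp (- lam' / 2))
      = (1/2) ^ c * exp (- lam' / 2) * (1 + - p / 2)"
    by (simp add: algebra_simps)
  also have "\<dots> \<le> (1/2) ^ c * exp (- lam' / 2) * exp (- p / 2)"
    by (intro mult_left_mono exp_ge_add_one_self) auto
  also have "\<dots> = (1/2) ^ c * exp (- (lam' + p) / 2)"
    by (simp add: exp_add[symmetric] field_simps)
  also have "\<dots> \<le> (1/2) ^ c * exp (- lam / 2)"
    by (intro mult_left_mono) (auto simp: lam'_def)
  finally show ?thesis
    by (simp add: lam'_def)
qed

lemma measure_pmf_prob_le_nn_integral:
  fixes X :: "'a pmf"
  assumes "\<And>x. x \<in> set_pmf X \<Longrightarrow> x \<in> A \<Longrightarrow> 1 \<le> g x" "\<And>x. 0 \<le> g x"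
    and "(\<integral>\<^sup>+x. ennreal (g x) \<partial>X) \<le> ennreal c" "0 \<le> c"
  shows "measure_pmf.prob X A \<le> c"
proof -
  have "emeasure (measure_pmf X) A = (\<integral>\<^sup>+x. indicator A x \<partial>X)"
    by simp
  also have "\<dots> \<le> (\<integral>\<^sup>+x. ennreal (g x) \<partial>X)"
    using assms(1,2) by (intro nn_integral_mono_AE) (auto simp: AE_measure_pmf_iff indicator_def)
  also have "\<dots> \<le> ennreal c"
    by (rule assms(3))
  finally show ?thesis
    using assms(4) by (simp add: measure_pmf.emeasure_eq_measure ennreal_le_iff)
qed

lemma measure_pmf_prob_le_half_power:
  fixes X :: "'a pmf"
  assumes "(\<integral>\<^sup>+x. ennreal ((1/2) ^ f x) \<partial>X) \<le> ennreal B" "0 \<le> B"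
  shows "measure_pmf.prob X {x. real (f x) \<le> T} \<le> 2 powr T * B"
proof (rule measure_pmf_prob_le_nn_integral[where g = "\<lambda>x. 2 powr T * (1/2) ^ f x"])
  fix x assume "x \<in> {x. real (f x) \<le> T}"
  then have "2 powr real (f x) \<le> 2 powr T"
    by simp
  then show "1 \<le> 2 powr T * (1/2) ^ f x"
    by (simp add: powr_realpow power_one_over field_simps)
next
  have "(\<integral>\<^sup>+x. ennreal (2 powr T * (1/2) ^ f x) \<partial>X)
      = ennreal (2 powr T) * (\<integral>\<^sup>+x. ennreal ((1/2) ^ f x) \<partial>X)"
    by (simp add: ennreal_mult nn_integral_cmult)
  also have "\<dots> \<le> ennreal (2 powr T * B)"
    using assms by (simp add: ennreal_mult mult_left_mono)
  finally show "(\<integral>\<^sup>+x. ennreal (2 powr T * (1/2) ^ f x) \<partial>X) \<le> ennreal (2 powr T * B)" .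
qed (use assms(2) in auto)

context hyz_window
begin

lemma exec_count_half_power:
  assumes "window_inv s" "ntot s + m = 2 * n0" "0 \<le> lam" "lam \<le> budget s"
  shows "(\<integral>\<^sup>+x. ennreal ((1/2) ^ fst (snd x)) \<partial>exec_count k eps m s) \<le> ennreal (exp (- lam / 2))"
  using exec_count_potential_bound[where G = "\<lambda>c r. (1/2) ^ (r + c)"
      and V = "\<lambda>c lam. (1/2) ^ c * exp (- lam / 2)" and sh = Suc and i = 0, OF _ _ _ _ assms]
    half_power_exp_step
  by simp

lemma exec_count_tail:
  assumes "window_inv s" "ntot s + m = 2 * n0" "0 \<le> lam" "lam \<le> budget s"
  shows "measure_pmf.prob (exec_count k eps m s) {x. int (fst (snd x)) \<le> j} \<le> tail_bound j lam"
proof (rule measure_pmf_prob_le_nn_integral[where g = "\<lambda>x. if int (fst (snd x)) \<le> j then 1 else 0"])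
  show "(\<integral>\<^sup>+x. ennreal (if int (fst (snd x)) \<le> j then 1 else 0) \<partial>exec_count k eps m s)
      \<le> ennreal (tail_bound j lam)"
    by (rule exec_count_potential_bound[where G = "\<lambda>j r. if int r \<le> j then 1 else 0"
        and V = tail_bound and sh = "\<lambda>j. j - 1", OF _ _ tail_bound_step tail_bound_nonneg assms])
      (auto simp: tail_bound_def)
qed (use assms tail_bound_nonneg in auto)

end

section \<open>Few reporting sites are unlikely\<close>

lemma half_power_tail_le:
  fixes S :: real
  assumes "12 \<le> S" "real k < S"
  shows "2 powr (real k / 8 + 2) * exp (- S / 4) \<le> exp (- S / 32)"
proof -
  have "2 powr (real k / 8 + 2) = exp ((real k / 8 + 2) * ln 2)"
    by (simp add: powr_def)
  also have "\<dots> \<le> exp ((real k / 8 + 2) * (25 / 36))"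
    using ln2_le_25_over_36 by (intro exp_mono mult_left_mono) auto
  finally have "2 powr (real k / 8 + 2) * exp (- S / 4)
      \<le> exp ((real k / 8 + 2) * (25 / 36)) * exp (- S / 4)"
    by (rule mult_right_mono) simp
  also have "\<dots> = exp ((real k / 8 + 2) * (25 / 36) + - S / 4)"
    by (rule exp_add[symmetric])
  also have "\<dots> \<le> exp (- S / 32)"
    using assms by (simp add: field_simps)
  finally show ?thesis .
qed

lemma tail_bound_3_le:
  fixes S :: real
  assumes "8 < S" "S < 12"
  obtains lam where "0 \<le> lam" "lam \<le> S / 2" "tail_bound 3 lam \<le> exp (- S / 32)"
proof (cases "S < 10")
  case True
  have "exp_taylor 3 5 \<le> exp_taylor 9 (59 / 16)"
    by (simp add: exp_taylor_def eval_nat_numeral)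
  also have "\<dots> \<le> exp (59 / 16)"
    by (rule exp_taylor_le_exp) simp
  finally have "tail_bound 3 4 \<le> exp (- 4) * exp (59 / 16)"
    by (simp add: tail_bound_def)
  also have "\<dots> \<le> exp (- S / 32)"
    using True by (simp add: exp_add[symmetric])
  finally show ?thesis
    using that[of 4] assms by simp
next
  case False
  have "exp_taylor 3 (25 / 4) \<le> exp_taylor 6 (37 / 8)"
    by (simp add: exp_taylor_def eval_nat_numeral)
  also have "\<dots> \<le> exp (37 / 8)"
    by (rule exp_taylor_le_exp) simp
  finally have "tail_bound 3 5 \<le> exp (- 5) * exp (37 / 8)"
    by (simp add: tail_bound_def)
  also have "\<dots> \<le> exp (- S / 32)"
    using assms by (simp add: exp_add[symmetric])
  finally show ?thesis
    using that[of 5] False by simp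
qed

lemma measure_pmf_prob_mono_support:
  assumes "\<And>x. x \<in> set_pmf X \<Longrightarrow> x \<in> A \<Longrightarrow> x \<in> B"
  shows "measure_pmf.prob X A \<le> measure_pmf.prob X B"
  using assms by (intro measure_pmf.finite_measure_mono_AE) (auto simp: AE_measure_pmf_iff)

lemma few_sites_few_reports:
  assumes "R = 0 \<longleftrightarrow> r = 0" "R = k \<or> r \<le> R + 2" "real R \<le> real k / 8"
  shows "k < 8 \<Longrightarrow> r = 0" "8 \<le> k \<Longrightarrow> real r \<le> real k / 8 + 2"
    "8 \<le> k \<Longrightarrow> k < 12 \<Longrightarrow> r \<le> 3"
proof -
  show "k < 8 \<Longrightarrow> r = 0"
    using assms by simp
  assume "8 \<le> k"
  with assms have "r \<le> R + 2"
    by auto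
  with assms(3) show "real r \<le> real k / 8 + 2"
    by linarith
  assume "k < 12"
  with assms(3) have "R \<le> 1"
    by simp
  with \<open>r \<le> R + 2\<close> show "r \<le> 3"
    by simp
qed

lemma prob_few_sites_le:
  fixes X :: "'a pmf" and R r :: "'a \<Rightarrow> nat" and S :: real
  assumes cover: "\<And>x. x \<in> set_pmf X \<Longrightarrow> (R x = 0 \<longleftrightarrow> r x = 0) \<and> (R x = k \<or> r x \<le> R x + 2)"
    and half_power: "(\<integral>\<^sup>+x. ennreal ((1/2) ^ r x) \<partial>X) \<le> ennreal (exp (- S / 4))"
    and tail: "\<And>lam. 0 \<le> lam \<Longrightarrow> lam \<le> S / 2 \<Longrightarrow> measure_pmf.prob X {x. r x \<le> 3} \<le> tail_bound 3 lam"
    and k: "real k < S"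
  shows "measure_pmf.prob X {x. real (R x) \<le> real k / 8} \<le> exp (- S / 32)"
proof -
  note few = few_sites_few_reports[OF conjunct1[OF cover] conjunct2[OF cover]]
  consider "k < 8" | "8 \<le> k" "12 \<le> S" | "8 \<le> k" "S < 12"
    by linarith
  then show ?thesis
  proof cases
    case 1
    have "measure_pmf.prob X {x. real (R x) \<le> real k / 8} \<le> measure_pmf.prob X {x. real (r x) \<le> 0}"
      using few(1) 1 by (intro measure_pmf_prob_mono_support) auto
    also have "\<dots> \<le> 2 powr 0 * exp (- S / 4)"
      by (rule measure_pmf_prob_le_half_power[OF half_power]) simp
    also have "\<dots> \<le> exp (- S / 32)"
      using k by simp
    finally show ?thesis .
  next
    case 2
    have "measure_pmf.prob X {x. real (R x) \<le> real k / 8}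
        \<le> measure_pmf.prob X {x. real (r x) \<le> real k / 8 + 2}"
      using few(2) 2 by (intro measure_pmf_prob_mono_support) auto
    also have "\<dots> \<le> 2 powr (real k / 8 + 2) * exp (- S / 4)"
      by (rule measure_pmf_prob_le_half_power[OF half_power]) simp
    also have "\<dots> \<le> exp (- S / 32)"
      using half_power_tail_le 2 k by simp
    finally show ?thesis .
  next
    case 3
    obtain lam where lam: "0 \<le> lam" "lam \<le> S / 2" "tail_bound 3 lam \<le> exp (- S / 32)"
      using tail_bound_3_le[of S] 3 k by force
    have "measure_pmf.prob X {x. real (R x) \<le> real k / 8} \<le> measure_pmf.prob X {x. r x \<le> 3}"
      using few(3) 3 k by (intro measure_pmf_prob_mono_support) auto
    also have "\<dots> \<le> tail_bound 3 lam"
      using tail lam by simp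
    finally show ?thesis
      using lam(3) by linarith
  qed
qed

lemma (in hyz_window) round_start_window:
  assumes "s \<in> set_pmf (run k eps n0 init_st)" and "round_start s"
  shows "window_inv s" "ntot s = n0" "budget s = scale / 2"
proof -
  obtain R r where "(R, r, s) \<in> set_pmf (exec_count k eps n0 init_st)"
    using assms(1) by (auto simp: run_def exec_eq_map_exec_count split_beta)
  from exec_count_reachable(1,2)[OF reachable_inv_init[OF k_ge_1] k_ge_1 this]
  have inv: "reachable_inv k eps s" and ntot: "ntot s = n0"
    by (simp_all add: init_st_def)
  have round: "pp s = newp k eps (tau s)" "tau s = srv_sum s" "pp s < 1 \<Longrightarrow> nhat_consistent s"
    using inv assms(2) by (auto simp: reachable_inv_def)
  have "0 < n0"
    using n0_ge_scale scale_pos by simp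
  then have tau: "tau s \<le> n0" "n0 < 2 * tau s"
    using inv counters_inv_srv_sum ntot round(2) by (auto simp: reachable_inv_def)
  then have "2 * scale < real (tau s)"
    using n0_ge_scale by linarith
  then have "pp s < 1"
    using newp_bounds(2)[of "tau s"] round(1) by simp
  then show "window_inv s" "ntot s = n0" "budget s = scale / 2"
    using inv ntot round tau by (simp_all add: window_inv_def budget_def report_mass_start)
qed

lemma less_sqrt_div:
  fixes x eps :: real
  assumes "0 < x" "0 < eps" "eps * sqrt x < 1"
  shows "x < sqrt x / eps"
proof -
  have "x * eps = sqrt x * (eps * sqrt x)"
    using assms(1) by (simp add: algebra_simps)
  also have "\<dots> < sqrt x * 1"
    using assms by (intro mult_strict_left_mono) auto
  finally show ?thesis
    using assms by (simp add: pos_less_divide_eq)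
qed

lemma (in hyz_window) prob_few_sites_window:
  assumes start: "window_inv s" "ntot s = n0" "budget s = scale / 2" and k: "real k < scale"
  shows "measure_pmf.prob (exec_count k eps n0 s) {x. real (card (fst x)) \<le> real k / 8}
    \<le> exp (- scale / 32)"
proof (rule prob_few_sites_le[where R = "\<lambda>x. card (fst x)" and r = "\<lambda>x. fst (snd x)", OF _ _ _ k])
  fix x assume "x \<in> set_pmf (exec_count k eps n0 s)"
  then show "(card (fst x) = 0 \<longleftrightarrow> fst (snd x) = 0) \<and>
      (card (fst x) = k \<or> fst (snd x) \<le> card (fst x) + 2)"
    using exec_count_covers[OF start(1)] start(2) by (cases x) auto
next
  show "(\<integral>\<^sup>+x. ennreal ((1/2) ^ fst (snd x)) \<partial>exec_count k eps n0 s) \<le> ennreal (exp (- scale / 4))"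
    using exec_count_half_power[OF start(1), of n0 "scale / 2"] start scale_pos by simp
next
  fix lam assume "0 \<le> lam" "lam \<le> scale / 2"
  then show "measure_pmf.prob (exec_count k eps n0 s) {x. fst (snd x) \<le> 3} \<le> tail_bound 3 lam"
    using exec_count_tail[OF start(1), of n0 lam 3] start by simp
qed

theorem mainTheorem2:
  fixes k :: nat and eps :: real and n0 :: nat and s :: st
  assumes "k \<ge> 1" and "eps > 0" and "eps * sqrt (real k) < 1"
    and "real n0 \<ge> 4 * sqrt (real k) / eps"
    and "s \<in> set_pmf (run k eps n0 init_st)" and "round_start s"
  shows "measure_pmf.prob (exec k eps n0 s) {x. real (card (fst x)) > real k / 8}
           \<ge> 1 - exp (- sqrt (real k) / (32 * eps))"
proof -
  interpret hyz_window k eps n0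
    using assms(1,2,4) by unfold_locales auto
  define few where "few = {x :: nat set \<times> nat \<times> st. real (card (fst x)) \<le> real k / 8}"
  have "real k < scale"
    using less_sqrt_div[of "real k" eps] assms(1-3) by (simp add: scale_def)
  with round_start_window[OF assms(5,6)]
  have "measure_pmf.prob (exec_count k eps n0 s) few \<le> exp (- scale / 32)"
    unfolding few_def by (rule prob_few_sites_window)
  moreover have "measure_pmf.prob (exec k eps n0 s) {x. real (card (fst x)) > real k / 8}
      = 1 - measure_pmf.prob (exec_count k eps n0 s) few"
    using measure_pmf.prob_compl[of few "exec_count k eps n0 s"]
    by (simp add: few_def exec_eq_map_exec_count split_beta set_diff_eq not_le)
  ultimately show ?thesis
    by (simp add: scale_def mult.commute)
qed

end
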